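(* Let $X_1\subset X_0$ be Banach spaces with continuous embedding, $q\in[1,\infty]$, and set $X_\theta:=(X_0,X_1)_{\theta,q}$ for $\theta\in(0,1)$ (real interpolation). Let $0<\theta_1<\theta_2<\cdots<\theta_n<1$ be fixed. Suppose $l\in X_0'$ satisfies, for some $C_0,C_1,\varepsilon>0$, $$|l(f)|\le C_0\|f\|_{X_0}\quad\forall f\in X_0,\qquad |l(f)|\le C_1\Big[\sum_{i=1}^n\varepsilon^{\theta_i}\|f\|_{X_{\theta_i}}+\varepsilon\|f\|_{X_1}\Big]\quad\forall f\in X_1.$$ Then there is a constant $C>0$, depending on $C_0,C_1$, the $\theta_i$, $q$ and the spaces but independent of $\varepsilon$, such that $|l(f)|\le C\varepsilon^{\theta_1}\|f\|_{X_{\theta_1}}$ for all $f\in X_{\theta_1}$.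
   Context: $(X_0,X_1)_{\theta,q}$ denotes the real ($K$-method) interpolation space with $K(t,f)=\inf_{g\in X_1}(\|f-g\|_{X_0}+t\|g\|_{X_1})$. *)

theory Defs
  imports "HOL-Analysis.Analysis"
begin

text \<open>X_0 is modelled as the Banach space type 'a (with its norm). X_1 is a subset S of 'a
with its own norm n1; it is a linear subspace, n1 is a complete norm on S, and the
embedding S \<hookrightarrow> 'a is continuous.\<close>

definition banach_subspace :: "'a::banach set \<Rightarrow> ('a \<Rightarrow> real) \<Rightarrow> bool" where
  "banach_subspace S n1 \<longleftrightarrow>
     subspace S \<and>
     (\<forall>x\<in>S. 0 \<le> n1 x) \<and>
     (\<forall>x\<in>S. n1 x = 0 \<longleftrightarrow> x = 0) \<and>
     (\<forall>x\<in>S. \<forall>c::real. n1 (c *\<^sub>R x) = \<bar>c\<bar> * n1 x) \<and>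
     (\<forall>x\<in>S. \<forall>y\<in>S. n1 (x + y) \<le> n1 x + n1 y) \<and>
     (\<forall>u::nat \<Rightarrow> 'a. (\<forall>k. u k \<in> S) \<and>
         (\<forall>e>0. \<exists>N. \<forall>m\<ge>N. \<forall>k\<ge>N. n1 (u m - u k) < e) \<longrightarrow>
         (\<exists>x\<in>S. (\<lambda>k. n1 (u k - x)) \<longlonglongrightarrow> 0)) \<and>
     (\<exists>c. \<forall>x\<in>S. norm x \<le> c * n1 x)"

definition Kfun :: "'a::banach set \<Rightarrow> ('a \<Rightarrow> real) \<Rightarrow> real \<Rightarrow> 'a \<Rightarrow> real" where
  "Kfun S n1 t f = Inf ((\<lambda>g. norm (f - g) + t * n1 g) ` S)"

text \<open>Norm of (X_0,X_1)_{\<theta>,q}, valued in [0,\<infinity>]; q \<in> [1,\<infinity>] as an ennreal.\<close>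
definition interp_norm :: "'a::banach set \<Rightarrow> ('a \<Rightarrow> real) \<Rightarrow> real \<Rightarrow> ennreal \<Rightarrow> 'a \<Rightarrow> ennreal" where
  "interp_norm S n1 \<theta> q f =
     (if q = \<infinity> then (SUP t\<in>{0<..}. ennreal (t powr (-\<theta>) * Kfun S n1 t f))
      else (let I = (\<integral>\<^sup>+ t\<in>{0<..}. ennreal ((t powr (-\<theta>) * Kfun S n1 t f) powr (enn2real q) / t) \<partial>lborel)
            in if I = \<infinity> then \<infinity> else ennreal ((enn2real I) powr (1 / enn2real q))))"

definition interp_space :: "'a::banach set \<Rightarrow> ('a \<Rightarrow> real) \<Rightarrow> real \<Rightarrow> ennreal \<Rightarrow> 'a set" where
  "interp_space S n1 \<theta> q = {f. interp_norm S n1 \<theta> q f < \<infinity>}"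

abbreviation interp_nrm :: "'a::banach set \<Rightarrow> ('a \<Rightarrow> real) \<Rightarrow> real \<Rightarrow> ennreal \<Rightarrow> 'a \<Rightarrow> real" where
  "interp_nrm S n1 \<theta> q f \<equiv> enn2real (interp_norm S n1 \<theta> q f)"

end

theory Submission
  imports Defs
begin

text \<open>Let \<open>\<theta> = \<theta>\<^sub>1\<close> and split \<open>f\<close> at scale \<open>\<epsilon>\<close>: pick \<open>g \<in> X\<^sub>1\<close> with
  \<open>\<parallel>f - g\<parallel>\<^sub>0 + \<epsilon> \<parallel>g\<parallel>\<^sub>1 \<le> 2 K(\<epsilon>, f) \<le> C \<epsilon>^\<theta> \<parallel>f\<parallel>\<^sub>\<theta>\<close>. The first hypothesis bounds \<open>l(f - g)\<close>,
  and the second one bounds \<open>l(g)\<close> once we know \<open>\<parallel>g\<parallel>\<^sub>\<theta>\<^sub>i \<le> C \<epsilon>^(\<theta> - \<theta>\<^sub>i) \<parallel>f\<parallel>\<^sub>\<theta>\<close>.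
  That estimate comes from splitting the K-functional norm of \<open>g\<close> at \<open>t = \<epsilon>\<close>: for \<open>t \<le> \<epsilon>\<close> use
  \<open>K(t, g) \<le> t \<parallel>g\<parallel>\<^sub>1\<close>, and for \<open>t \<ge> \<epsilon>\<close> use \<open>K(t, g) \<le> K(t, f) + \<parallel>f - g\<parallel>\<^sub>0 \<le> 3 K(t, f)\<close>.\<close>

lemma banach_subspace_zero: "banach_subspace S n1 \<Longrightarrow> 0 \<in> S"
  unfolding banach_subspace_def by (auto simp: subspace_def)

lemma banach_subspace_nonneg: "banach_subspace S n1 \<Longrightarrow> x \<in> S \<Longrightarrow> 0 \<le> n1 x"
  unfolding banach_subspace_def by auto

lemma banach_subspace_embedding:
  assumes "banach_subspace S n1"
  obtains c where "c > 0" "\<And>x. x \<in> S \<Longrightarrow> norm x \<le> c * n1 x"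
proof -
  obtain c where c: "\<forall>x\<in>S. norm x \<le> c * n1 x"
    using assms unfolding banach_subspace_def by auto
  have "norm x \<le> max c 1 * n1 x" if "x \<in> S" for x
    using c that banach_subspace_nonneg[OF assms that] mult_right_mono[of c "max c 1" "n1 x"]
    by fastforce
  moreover have "max c 1 > 0" by simp
  ultimately show thesis using that by blast
qed

lemma nn_integral_powr_from_0_le:
  fixes r e c :: real
  assumes r: "r > 0" and e: "e > 0" and c: "c \<ge> 0"
  shows "(\<integral>\<^sup>+ t. ennreal (c * t powr (r - 1)) * indicator {0<..e} t \<partial>lborel) \<le> ennreal (c * (e powr r / r))"
proof -
  have "((\<lambda>x. x powr (r - 1)) has_integral (e powr (r - 1 + 1) / (r - 1 + 1))) {0..e}"
    using r e by (intro has_integral_powr_from_0) auto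
  from has_integral_mult_right[OF this, of c]
  have "((\<lambda>x. c * x powr (r - 1)) has_integral (c * (e powr r / r))) {0..e}" by simp
  then have eq: "(\<integral>\<^sup>+ x. ennreal (indicator {0..e} x * (c * x powr (r - 1))) \<partial>lborel) = ennreal (c * (e powr r / r))"
    using c by (intro nn_integral_has_integral_lebesgue) auto
  have "(\<integral>\<^sup>+ t. ennreal (c * t powr (r - 1)) * indicator {0<..e} t \<partial>lborel)
      \<le> (\<integral>\<^sup>+ x. ennreal (indicator {0..e} x * (c * x powr (r - 1))) \<partial>lborel)"
    by (intro nn_integral_mono) (auto simp: indicator_def)
  then show ?thesis using eq by simp
qed

lemma nn_integral_powr_to_inf:
  fixes a e c :: real
  assumes "e < -1" "a > 0" "c \<ge> 0"
  shows "(\<integral>\<^sup>+ t. ennreal (c * t powr e) * indicator {a..} t \<partial>lborel) = ennreal (c * (-(a powr (e+1)) / (e+1)))"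
proof -
  have "((\<lambda>x. c * x powr e) has_integral (c * (-(a powr (e+1)) / (e+1)))) {a..}"
    using has_integral_mult_right[OF has_integral_powr_to_inf[OF assms(1,2)], of c] by simp
  then have "(\<integral>\<^sup>+ x. ennreal (indicator {a..} x * (c * x powr e)) \<partial>lborel) = ennreal (c * (-(a powr (e+1)) / (e+1)))"
    using assms by (intro nn_integral_has_integral_lebesgue) auto
  moreover have "(\<integral>\<^sup>+ t. ennreal (c * t powr e) * indicator {a..} t \<partial>lborel)
      = (\<integral>\<^sup>+ x. ennreal (indicator {a..} x * (c * x powr e)) \<partial>lborel)"
    by (intro nn_integral_cong) (auto simp: indicator_def)
  ultimately show ?thesis by simp
qed

lemma enn2real_ge_1: "1 \<le> q \<Longrightarrow> q \<noteq> \<infinity> \<Longrightarrow> 1 \<le> enn2real q"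
  using enn2real_mono[of 1 q] by (simp add: less_top)

lemma split_bound_eq:
  fixes p \<theta> \<theta>' \<epsilon> J M :: real
  assumes p: "1 \<le> p" and th: "\<theta>' < 1" and e: "\<epsilon> > 0" and M: "0 \<le> M" "M powr p = \<theta> * p * J"
  shows "(2 * M * \<epsilon> powr (\<theta> - 1)) powr p * (\<epsilon> powr ((1 - \<theta>') * p) / ((1 - \<theta>') * p))
       + (3 * \<epsilon> powr (\<theta> - \<theta>')) powr p * J
       = \<epsilon> powr ((\<theta> - \<theta>') * p) * J * (2 powr p * \<theta> / (1 - \<theta>') + 3 powr p)"
proof -
  have "(2 * M * \<epsilon> powr (\<theta> - 1)) powr p = 2 powr p * M powr p * \<epsilon> powr ((\<theta> - 1) * p)"
    using M e by (simp add: powr_mult powr_powr)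
  moreover have "(3 * \<epsilon> powr (\<theta> - \<theta>')) powr p = 3 powr p * \<epsilon> powr ((\<theta> - \<theta>') * p)"
    using e by (simp add: powr_mult powr_powr)
  moreover have "\<epsilon> powr ((\<theta> - 1) * p) * \<epsilon> powr ((1 - \<theta>') * p) = \<epsilon> powr ((\<theta> - \<theta>') * p)"
    using e by (simp add: powr_add[symmetric] algebra_simps)
  ultimately show ?thesis using M(2) th p by (simp add: field_simps)
qed

definition interp_integral :: "'a::banach set \<Rightarrow> ('a \<Rightarrow> real) \<Rightarrow> real \<Rightarrow> real \<Rightarrow> 'a \<Rightarrow> ennreal" where
  "interp_integral S n1 \<theta> p f = (\<integral>\<^sup>+ t\<in>{0<..}. ennreal ((t powr (-\<theta>) * Kfun S n1 t f) powr p / t) \<partial>lborel)"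

lemma interp_integral_finite:
  "q \<noteq> \<infinity> \<Longrightarrow> f \<in> interp_space S n1 \<theta> q \<Longrightarrow> interp_integral S n1 \<theta> (enn2real q) f \<noteq> \<infinity>"
  unfolding interp_space_def interp_norm_def interp_integral_def Let_def by (auto split: if_splits)

lemma interp_nrm_eq_integral:
  "q \<noteq> \<infinity> \<Longrightarrow> interp_integral S n1 \<theta> (enn2real q) f \<noteq> \<infinity> \<Longrightarrow>
    interp_nrm S n1 \<theta> q f = enn2real (interp_integral S n1 \<theta> (enn2real q) f) powr (1 / enn2real q)"
  unfolding interp_norm_def interp_integral_def Let_def by simp

text \<open>\<open>interp_sup_const q \<theta>\<close> bounds the embedding \<open>(X\<^sub>0, X\<^sub>1)\<^sub>\<theta>\<^sub>,\<^sub>q \<hookrightarrow> (X\<^sub>0, X\<^sub>1)\<^sub>\<theta>\<^sub>,\<^sub>\<infinity>\<close>: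
  as \<open>K(\<cdot>, f)\<close> is nondecreasing, the part \<open>s \<ge> t\<close> of the norm integral is at least
  \<open>(t^-\<theta> K(t, f))^q / (\<theta> q)\<close>. The two summands of \<open>decomp_const\<close> are the contributions of
  \<open>t \<le> \<epsilon>\<close> and \<open>t \<ge> \<epsilon>\<close> in the splitting described above.\<close>

definition interp_sup_const :: "ennreal \<Rightarrow> real \<Rightarrow> real" where
  "interp_sup_const q \<theta> = (if q = \<infinity> then 1 else (\<theta> * enn2real q) powr (1 / enn2real q))"

definition decomp_const :: "ennreal \<Rightarrow> real \<Rightarrow> real \<Rightarrow> real" where
  "decomp_const q \<theta> \<theta>' = (if q = \<infinity> then 3 else
      (2 powr (enn2real q) * \<theta> / (1 - \<theta>') + 3 powr (enn2real q)) powr (1 / enn2real q))"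

lemma interp_sup_const_nonneg: "0 \<le> interp_sup_const q \<theta>"
  unfolding interp_sup_const_def by auto

lemma decomp_const_nonneg: "0 \<le> decomp_const q \<theta> \<theta>'"
  unfolding decomp_const_def by auto

context
  fixes S :: "'a::banach set" and n1 :: "'a \<Rightarrow> real"
  assumes bs: "banach_subspace S n1"
begin

lemma Kfun_le: "g \<in> S \<Longrightarrow> 0 \<le> t \<Longrightarrow> Kfun S n1 t f \<le> norm (f - g) + t * n1 g"
  unfolding Kfun_def
  by (rule cInf_lower) (auto intro!: bdd_belowI[of _ 0] simp: banach_subspace_nonneg[OF bs])

lemma Kfun_greatest:
  "0 \<le> t \<Longrightarrow> (\<And>g. g \<in> S \<Longrightarrow> y \<le> norm (f - g) + t * n1 g) \<Longrightarrow> y \<le> Kfun S n1 t f"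
  unfolding Kfun_def using banach_subspace_zero[OF bs] by (intro cInf_greatest) auto

lemma Kfun_nonneg: "0 \<le> t \<Longrightarrow> 0 \<le> Kfun S n1 t f"
  by (rule Kfun_greatest) (auto simp: banach_subspace_nonneg[OF bs])

lemma Kfun_less_obtain:
  assumes "0 \<le> t" "Kfun S n1 t f < y"
  obtains g where "g \<in> S" "norm (f - g) + t * n1 g < y"
proof -
  have "(\<lambda>g. norm (f - g) + t * n1 g) ` S \<noteq> {}" using banach_subspace_zero[OF bs] by auto
  moreover have "bdd_below ((\<lambda>g. norm (f - g) + t * n1 g) ` S)"
    using assms(1) banach_subspace_nonneg[OF bs] by (intro bdd_belowI[of _ 0]) auto
  ultimately have "\<exists>g\<in>S. norm (f - g) + t * n1 g < y"
    using assms(2) unfolding Kfun_def by (simp add: cInf_less_iff)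
  then show thesis using that by blast
qed

lemma Kfun_mono: "0 \<le> s \<Longrightarrow> s \<le> t \<Longrightarrow> Kfun S n1 s f \<le> Kfun S n1 t f"
proof (rule Kfun_greatest)
  fix g assume "g \<in> S" "0 \<le> s" "s \<le> t"
  then have "Kfun S n1 s f \<le> norm (f - g) + s * n1 g" by (intro Kfun_le) auto
  also have "\<dots> \<le> norm (f - g) + t * n1 g"
    using \<open>s \<le> t\<close> banach_subspace_nonneg[OF bs \<open>g \<in> S\<close>] by (simp add: mult_right_mono)
  finally show "Kfun S n1 s f \<le> norm (f - g) + t * n1 g" .
qed simp

lemma Kfun_triangle: "0 \<le> t \<Longrightarrow> Kfun S n1 t g \<le> Kfun S n1 t f + norm (f - g)"
proof -
  assume t: "0 \<le> t"
  have "Kfun S n1 t g - norm (f - g) \<le> Kfun S n1 t f"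
  proof (rule Kfun_greatest[OF t])
    fix h assume h: "h \<in> S"
    have "Kfun S n1 t g \<le> norm (g - h) + t * n1 h" using h t by (intro Kfun_le)
    also have "norm (g - h) \<le> norm (f - g) + norm (f - h)"
      using norm_triangle_ineq4[of "f - h" "f - g"] by (simp add: norm_minus_commute algebra_simps)
    finally show "Kfun S n1 t g - norm (f - g) \<le> norm (f - h) + t * n1 h" by simp
  qed
  then show ?thesis by simp
qed

lemma Kfun_eq_0_imp:
  assumes t: "0 < t" and K0: "Kfun S n1 t f = 0"
  shows "f = 0"
proof -
  obtain c where c: "c > 0" "\<And>x. x \<in> S \<Longrightarrow> norm x \<le> c * n1 x"
    using banach_subspace_embedding[OF bs] by blast
  define a where "a = 1 + c / t"
  have a: "a > 0" unfolding a_def using c(1) t by (simp add: add_pos_pos)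
  have "norm f \<le> 0 + e" if e: "e > 0" for e
  proof -
    obtain g where g: "g \<in> S" "norm (f - g) + t * n1 g < e / a"
      using Kfun_less_obtain[of t f "e / a"] K0 t e a by auto
    have "norm f \<le> norm (f - g) + c * n1 g" using norm_triangle_sub[of f g] c(2)[OF g(1)] by simp
    also have "\<dots> \<le> a * (norm (f - g) + t * n1 g)"
      using t c banach_subspace_nonneg[OF bs g(1)] by (simp add: a_def field_simps)
    also have "\<dots> \<le> e" using g a by (simp add: field_simps)
    finally show ?thesis by simp
  qed
  then have "norm f \<le> 0" by (rule field_le_epsilon)
  then show ?thesis by simp
qed

lemma interp_integral_tail_ge:
  assumes p: "p \<ge> 1" and th: "0 < \<theta>" and t: "t > 0"
  shows "ennreal ((t powr (-\<theta>) * Kfun S n1 t f) powr p / (\<theta> * p)) \<le> interp_integral S n1 \<theta> p f"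
proof -
  define k where "k = Kfun S n1 t f"
  have k0: "0 \<le> k" unfolding k_def using t by (intro Kfun_nonneg) auto
  have "(\<integral>\<^sup>+ s. ennreal (k powr p * s powr (-\<theta>*p - 1)) * indicator {t..} s \<partial>lborel)
      \<le> interp_integral S n1 \<theta> p f"
    unfolding interp_integral_def
  proof (intro nn_integral_mono)
    fix s :: real
    show "ennreal (k powr p * s powr (-\<theta>*p - 1)) * indicator {t..} s
        \<le> ennreal ((s powr (-\<theta>) * Kfun S n1 s f) powr p / s) * indicator {0<..} s"
    proof (cases "t \<le> s")
      case True
      then have s: "s > 0" using t by auto
      have "k \<le> Kfun S n1 s f" unfolding k_def using True t by (intro Kfun_mono) auto
      then have "(s powr (-\<theta>) * k) powr p \<le> (s powr (-\<theta>) * Kfun S n1 s f) powr p"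
        using k0 p by (intro powr_mono2 mult_left_mono) auto
      moreover have "(s powr (-\<theta>) * k) powr p = k powr p * s powr (-\<theta>*p)"
        using k0 s by (simp add: powr_mult powr_powr mult.commute)
      moreover have "s powr (-\<theta>*p - 1) = s powr (-\<theta>*p) / s"
        using s by (simp add: powr_diff)
      ultimately have "k powr p * s powr (-\<theta>*p - 1) \<le> (s powr (-\<theta>) * Kfun S n1 s f) powr p / s"
        using s by (simp add: divide_right_mono)
      then show ?thesis using True s by (auto simp: indicator_def)
    qed (auto simp: indicator_def)
  qed
  moreover have "(\<integral>\<^sup>+ s. ennreal (k powr p * s powr (-\<theta>*p - 1)) * indicator {t..} s \<partial>lborel)
       = ennreal (k powr p * (-(t powr (-\<theta>*p - 1 + 1)) / (-\<theta>*p - 1 + 1)))"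
    using th p t by (intro nn_integral_powr_to_inf) auto
  moreover have "k powr p * (-(t powr (-\<theta>*p - 1 + 1)) / (-\<theta>*p - 1 + 1))
      = (t powr (-\<theta>) * k) powr p / (\<theta> * p)"
    using th p t k0 by (simp add: powr_mult powr_powr field_simps)
  ultimately show ?thesis using th p unfolding k_def by simp
qed

lemma Kfun_le_interp_integral:
  assumes p: "p \<ge> 1" and th: "0 < \<theta>" and fin: "interp_integral S n1 \<theta> p f \<noteq> \<infinity>" and t: "t > 0"
  shows "t powr (-\<theta>) * Kfun S n1 t f \<le> (\<theta> * p * enn2real (interp_integral S n1 \<theta> p f)) powr (1 / p)"
proof -
  define x where "x = t powr (-\<theta>) * Kfun S n1 t f"
  define I where "I = interp_integral S n1 \<theta> p f"
  have x0: "0 \<le> x" unfolding x_def using t Kfun_nonneg[of t f] by simp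
  have "I < top" using fin unfolding I_def by (simp add: less_top[symmetric])
  then have "x powr p / (\<theta> * p) \<le> enn2real I"
    using enn2real_mono[OF interp_integral_tail_ge[OF p th t]] th p
    unfolding x_def I_def by simp
  then have "x powr p \<le> \<theta> * p * enn2real I"
    using th p by (simp add: field_simps)
  then have "(x powr p) powr (1/p) \<le> (\<theta> * p * enn2real I) powr (1/p)"
    using p by (intro powr_mono2) auto
  then show ?thesis using p x0 unfolding x_def I_def by (simp add: powr_powr)
qed

lemma Kfun_le_interp_nrm:
  assumes q: "1 \<le> q" and th: "0 < \<theta>" and f: "f \<in> interp_space S n1 \<theta> q" and t: "t > 0"
  shows "t powr (-\<theta>) * Kfun S n1 t f \<le> interp_sup_const q \<theta> * interp_nrm S n1 \<theta> q f"
proof (cases "q = \<infinity>")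
  case True
  have "ennreal (t powr (-\<theta>) * Kfun S n1 t f) \<le> interp_norm S n1 \<theta> q f"
    unfolding interp_norm_def using True t by (auto intro: SUP_upper)
  then have "enn2real (ennreal (t powr (-\<theta>) * Kfun S n1 t f)) \<le> interp_nrm S n1 \<theta> q f"
    using f unfolding interp_space_def by (intro enn2real_mono) auto
  then show ?thesis using True t Kfun_nonneg[of t f] by (simp add: interp_sup_const_def)
next
  case False
  define p where "p = enn2real q"
  define I where "I = interp_integral S n1 \<theta> p f"
  have p: "1 \<le> p" unfolding p_def using enn2real_ge_1[OF q False] .
  have fin: "I \<noteq> \<infinity>" unfolding I_def p_def using interp_integral_finite[OF False f] .
  have "t powr (-\<theta>) * Kfun S n1 t f \<le> (\<theta> * p * enn2real I) powr (1 / p)"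
    unfolding I_def by (rule Kfun_le_interp_integral[OF p th fin[unfolded I_def] t])
  also have "\<dots> = (\<theta> * p) powr (1/p) * (enn2real I) powr (1 / p)"
    using th p by (simp add: powr_mult)
  also have "\<dots> = interp_sup_const q \<theta> * interp_nrm S n1 \<theta> q f"
    using interp_nrm_eq_integral[OF False fin[unfolded I_def p_def]] False
    unfolding interp_sup_const_def p_def I_def by simp
  finally show ?thesis .
qed

lemma Kfun_decomp_small:
  assumes e: "\<epsilon> > 0" and g: "g \<in> S"
    and gk: "norm (f - g) + \<epsilon> * n1 g \<le> 2 * Kfun S n1 \<epsilon> f"
    and M: "\<epsilon> powr (-\<theta>) * Kfun S n1 \<epsilon> f \<le> M"
    and t: "0 < t" "t \<le> \<epsilon>"
  shows "t powr (-\<theta>') * Kfun S n1 t g \<le> 2 * M * \<epsilon> powr (\<theta> - 1) * t powr (1 - \<theta>')"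
proof -
  have "Kfun S n1 \<epsilon> f \<le> \<epsilon> powr \<theta> * M"
    using mult_left_mono[OF M, of "\<epsilon> powr \<theta>"] e by (simp add: powr_minus field_simps)
  moreover have "\<epsilon> * n1 g \<le> 2 * Kfun S n1 \<epsilon> f" using gk norm_ge_zero[of "f - g"] by linarith
  ultimately have "n1 g \<le> 2 * M * \<epsilon> powr (\<theta> - 1)"
    using e by (simp add: powr_diff field_simps)
  then have "Kfun S n1 t g \<le> t * (2 * M * \<epsilon> powr (\<theta> - 1))"
    using Kfun_le[OF g, of t g] t by (simp add: mult_left_mono order_trans)
  then have "t powr (-\<theta>') * Kfun S n1 t g \<le> t powr (-\<theta>') * (t * (2 * M * \<epsilon> powr (\<theta> - 1)))"
    by (intro mult_left_mono) auto
  also have "\<dots> = 2 * M * \<epsilon> powr (\<theta> - 1) * t powr (1 - \<theta>')"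
    using t by (simp add: powr_diff powr_minus field_simps)
  finally show ?thesis .
qed

lemma Kfun_decomp_large:
  assumes th: "\<theta> \<le> \<theta>'" and e: "\<epsilon> > 0" and g: "g \<in> S"
    and gk: "norm (f - g) + \<epsilon> * n1 g \<le> 2 * Kfun S n1 \<epsilon> f"
    and t: "\<epsilon> \<le> t"
  shows "t powr (-\<theta>') * Kfun S n1 t g \<le> 3 * \<epsilon> powr (\<theta> - \<theta>') * (t powr (-\<theta>) * Kfun S n1 t f)"
proof -
  have "norm (f - g) \<le> 2 * Kfun S n1 \<epsilon> f"
    using gk e banach_subspace_nonneg[OF bs g] by (smt (verit) mult_nonneg_nonneg)
  also have "\<dots> \<le> 2 * Kfun S n1 t f" using t e Kfun_mono by auto
  finally have "Kfun S n1 t g \<le> 3 * Kfun S n1 t f" using Kfun_triangle[of t g f] t e by simp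
  then have "t powr (-\<theta>') * Kfun S n1 t g \<le> t powr (-\<theta>') * (3 * Kfun S n1 t f)"
    by (intro mult_left_mono) auto
  also have "\<dots> = 3 * t powr (\<theta> - \<theta>') * (t powr (-\<theta>) * Kfun S n1 t f)"
    using t e by (simp add: powr_add[symmetric])
  also have "\<dots> \<le> 3 * \<epsilon> powr (\<theta> - \<theta>') * (t powr (-\<theta>) * Kfun S n1 t f)"
    using th e t Kfun_nonneg[of t f]
    by (intro mult_right_mono mult_left_mono powr_mono2') auto
  finally show ?thesis .
qed

lemma interp_integrand_decomp_le:
  assumes th: "\<theta> \<le> \<theta>'" and e: "\<epsilon> > 0" and g: "g \<in> S"
    and gk: "norm (f - g) + \<epsilon> * n1 g \<le> 2 * Kfun S n1 \<epsilon> f"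
    and M: "\<epsilon> powr (-\<theta>) * Kfun S n1 \<epsilon> f \<le> M" and M0: "0 \<le> M" and p: "0 \<le> p"
  shows "ennreal ((t powr (-\<theta>') * Kfun S n1 t g) powr p / t) * indicator {0<..} t
     \<le> ennreal ((2 * M * \<epsilon> powr (\<theta> - 1)) powr p * t powr ((1 - \<theta>') * p - 1)) * indicator {0<..\<epsilon>} t
       + ennreal ((3 * \<epsilon> powr (\<theta> - \<theta>')) powr p)
         * (ennreal ((t powr (-\<theta>) * Kfun S n1 (max t \<epsilon>) f) powr p / t) * indicator {\<epsilon><..} t)"
proof (cases "t > 0")
  case t: True
  have Kg0: "0 \<le> Kfun S n1 t g" using t by (intro Kfun_nonneg) auto
  show ?thesis
  proof (cases "t \<le> \<epsilon>")
    case True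
    have "(t powr (-\<theta>') * Kfun S n1 t g) powr p \<le> (2 * M * \<epsilon> powr (\<theta> - 1) * t powr (1 - \<theta>')) powr p"
      using Kfun_decomp_small[OF e g gk M t True] Kg0 p by (intro powr_mono2) auto
    also have "\<dots> = (2 * M * \<epsilon> powr (\<theta> - 1)) powr p * t powr ((1 - \<theta>') * p)"
      using M0 t e by (simp add: powr_mult powr_powr)
    finally have "(t powr (-\<theta>') * Kfun S n1 t g) powr p / t
        \<le> (2 * M * \<epsilon> powr (\<theta> - 1)) powr p * t powr ((1 - \<theta>') * p - 1)"
      using t by (simp add: powr_diff divide_right_mono)
    then show ?thesis using t True by (auto simp: indicator_def intro!: ennreal_leI)
  next
    case False
    have "(t powr (-\<theta>') * Kfun S n1 t g) powr p
        \<le> (3 * \<epsilon> powr (\<theta> - \<theta>') * (t powr (-\<theta>) * Kfun S n1 t f)) powr p"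
      using Kfun_decomp_large[OF th e g gk] False Kg0 p by (intro powr_mono2) auto
    also have "\<dots> = (3 * \<epsilon> powr (\<theta> - \<theta>')) powr p * (t powr (-\<theta>) * Kfun S n1 t f) powr p"
      using Kfun_nonneg[of t f] t e by (simp add: powr_mult)
    finally have "(t powr (-\<theta>') * Kfun S n1 t g) powr p / t
        \<le> (3 * \<epsilon> powr (\<theta> - \<theta>')) powr p * ((t powr (-\<theta>) * Kfun S n1 t f) powr p / t)"
      using t by (simp add: divide_right_mono)
    then show ?thesis using t False
      by (auto simp: indicator_def max_def ennreal_mult'[symmetric] intro!: ennreal_leI)
  qed
qed (auto simp: indicator_def)

lemma interp_integral_decomp_le:
  assumes th: "\<theta> \<le> \<theta>'" "\<theta>' < 1" and e: "\<epsilon> > 0" and g: "g \<in> S"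
    and gk: "norm (f - g) + \<epsilon> * n1 g \<le> 2 * Kfun S n1 \<epsilon> f"
    and M: "\<epsilon> powr (-\<theta>) * Kfun S n1 \<epsilon> f \<le> M" and M0: "0 \<le> M"
    and p: "p \<ge> 1" and fin: "interp_integral S n1 \<theta> p f \<noteq> \<infinity>"
  shows "interp_integral S n1 \<theta>' p g
    \<le> ennreal ((2 * M * \<epsilon> powr (\<theta> - 1)) powr p * (\<epsilon> powr ((1 - \<theta>') * p) / ((1 - \<theta>') * p))
        + (3 * \<epsilon> powr (\<theta> - \<theta>')) powr p * enn2real (interp_integral S n1 \<theta> p f))"
proof -
  define c1 where "c1 = (2 * M * \<epsilon> powr (\<theta> - 1)) powr p"
  define c2 where "c2 = (3 * \<epsilon> powr (\<theta> - \<theta>')) powr p"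
  define r where "r = (1 - \<theta>') * p"
  define H where "H = (\<lambda>t. (t powr (-\<theta>) * Kfun S n1 (max t \<epsilon>) f) powr p / t)"
  have r0: "r > 0" unfolding r_def using th p by auto
  have c0: "c1 \<ge> 0" "c2 \<ge> 0" unfolding c1_def c2_def by auto
  text \<open>\<open>max t \<epsilon>\<close> makes the K-functional factor monotone on all of \<open>\<real>\<close>, hence Borel measurable.\<close>
  have "mono (\<lambda>t. Kfun S n1 (max t \<epsilon>) f)"
    by (rule monoI, rule Kfun_mono) (use e in auto)
  then have [measurable]: "(\<lambda>t. Kfun S n1 (max t \<epsilon>) f) \<in> borel_measurable borel"
    by (rule borel_measurable_mono)
  have [measurable]: "H \<in> borel_measurable borel" unfolding H_def by measurable
  have "interp_integral S n1 \<theta>' p g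
      \<le> (\<integral>\<^sup>+ t. ennreal (c1 * t powr (r - 1)) * indicator {0<..\<epsilon>} t
              + ennreal c2 * (ennreal (H t) * indicator {\<epsilon><..} t) \<partial>lborel)"
    unfolding interp_integral_def c1_def c2_def r_def H_def
    using interp_integrand_decomp_le[OF th(1) e g gk M M0] p by (intro nn_integral_mono) auto
  also have "\<dots> = (\<integral>\<^sup>+ t. ennreal (c1 * t powr (r - 1)) * indicator {0<..\<epsilon>} t \<partial>lborel)
        + ennreal c2 * (\<integral>\<^sup>+ t. ennreal (H t) * indicator {\<epsilon><..} t \<partial>lborel)"
    by (subst nn_integral_add) (auto simp: nn_integral_cmult)
  also have "\<dots> \<le> ennreal (c1 * (\<epsilon> powr r / r)) + ennreal c2 * interp_integral S n1 \<theta> p f"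
  proof (intro add_mono mult_left_mono)
    show "(\<integral>\<^sup>+ t. ennreal (c1 * t powr (r - 1)) * indicator {0<..\<epsilon>} t \<partial>lborel) \<le> ennreal (c1 * (\<epsilon> powr r / r))"
      using r0 e c0 by (intro nn_integral_powr_from_0_le) auto
    show "(\<integral>\<^sup>+ t. ennreal (H t) * indicator {\<epsilon><..} t \<partial>lborel) \<le> interp_integral S n1 \<theta> p f"
      unfolding interp_integral_def H_def using e
      by (intro nn_integral_mono) (auto simp: indicator_def)
  qed auto
  also have "\<dots> = ennreal (c1 * (\<epsilon> powr r / r) + c2 * enn2real (interp_integral S n1 \<theta> p f))"
    using fin c0 r0 e by (simp add: ennreal_enn2real_if ennreal_mult)
  finally show ?thesis unfolding c1_def c2_def r_def .
qed

lemma interp_nrm_decomp_le_infinity: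
  assumes th: "0 < \<theta>" "\<theta> \<le> \<theta>'" "\<theta>' < 1" and e: "\<epsilon> > 0" and g: "g \<in> S"
    and gk: "norm (f - g) + \<epsilon> * n1 g \<le> 2 * Kfun S n1 \<epsilon> f"
    and f: "f \<in> interp_space S n1 \<theta> \<infinity>"
  shows "interp_nrm S n1 \<theta>' \<infinity> g \<le> 3 * \<epsilon> powr (\<theta> - \<theta>') * interp_nrm S n1 \<theta> \<infinity> f"
proof -
  define A where "A = interp_nrm S n1 \<theta> \<infinity> f"
  have A0: "0 \<le> A" unfolding A_def by simp
  have A: "t powr (-\<theta>) * Kfun S n1 t f \<le> A" if "t > 0" for t
    using Kfun_le_interp_nrm[OF _ th(1) f that] unfolding A_def interp_sup_const_def by simp
  have "t powr (-\<theta>') * Kfun S n1 t g \<le> 3 * \<epsilon> powr (\<theta> - \<theta>') * A" if t: "t > 0" for t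
  proof (cases "t \<le> \<epsilon>")
    case True
    have "t powr (-\<theta>') * Kfun S n1 t g \<le> 2 * A * \<epsilon> powr (\<theta> - 1) * t powr (1 - \<theta>')"
      using Kfun_decomp_small[OF e g gk A[OF e] t True] .
    also have "\<dots> \<le> 2 * A * \<epsilon> powr (\<theta> - 1) * \<epsilon> powr (1 - \<theta>')"
      using A0 t True th by (intro mult_left_mono powr_mono2) auto
    also have "\<dots> = 2 * \<epsilon> powr (\<theta> - \<theta>') * A"
      using e by (simp add: powr_add[symmetric])
    also have "\<dots> \<le> 3 * \<epsilon> powr (\<theta> - \<theta>') * A"
      using A0 by (intro mult_right_mono) auto
    finally show ?thesis .
  next
    case False
    have "t powr (-\<theta>') * Kfun S n1 t g \<le> 3 * \<epsilon> powr (\<theta> - \<theta>') * (t powr (-\<theta>) * Kfun S n1 t f)"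
      using Kfun_decomp_large[OF th(2) e g gk] False by simp
    also have "\<dots> \<le> 3 * \<epsilon> powr (\<theta> - \<theta>') * A"
      using A[OF t] by (intro mult_left_mono) auto
    finally show ?thesis .
  qed
  then have "interp_norm S n1 \<theta>' \<infinity> g \<le> ennreal (3 * \<epsilon> powr (\<theta> - \<theta>') * A)"
    unfolding interp_norm_def by (auto intro!: SUP_least ennreal_leI)
  then show ?thesis unfolding A_def by (simp add: enn2real_leI)
qed

lemma interp_nrm_decomp_le_finite:
  assumes q: "1 \<le> q" "q \<noteq> \<infinity>" and th: "0 < \<theta>" "\<theta> \<le> \<theta>'" "\<theta>' < 1" and e: "\<epsilon> > 0"
    and g: "g \<in> S" and gk: "norm (f - g) + \<epsilon> * n1 g \<le> 2 * Kfun S n1 \<epsilon> f"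
    and f: "f \<in> interp_space S n1 \<theta> q"
  shows "interp_nrm S n1 \<theta>' q g \<le> decomp_const q \<theta> \<theta>' * \<epsilon> powr (\<theta> - \<theta>') * interp_nrm S n1 \<theta> q f"
proof -
  define p where "p = enn2real q"
  define J where "J = enn2real (interp_integral S n1 \<theta> p f)"
  define A where "A = interp_nrm S n1 \<theta> q f"
  define M where "M = interp_sup_const q \<theta> * A"
  have p: "1 \<le> p" unfolding p_def using enn2real_ge_1[OF q] .
  have fin: "interp_integral S n1 \<theta> p f \<noteq> \<infinity>" unfolding p_def using interp_integral_finite[OF q(2) f] .
  have J0: "0 \<le> J" unfolding J_def by simp
  have AJ: "A = J powr (1/p)"
    unfolding A_def J_def p_def using interp_nrm_eq_integral[OF q(2) fin[unfolded p_def]] by simp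
  have M0: "0 \<le> M" unfolding M_def A_def using interp_sup_const_nonneg by simp
  have Mp: "M powr p = \<theta> * p * J"
    unfolding M_def interp_sup_const_def AJ using q th p J0
    by (simp add: p_def[symmetric] powr_mult[symmetric] powr_powr)
  define B where "B = (2 * M * \<epsilon> powr (\<theta> - 1)) powr p * (\<epsilon> powr ((1 - \<theta>') * p) / ((1 - \<theta>') * p))
      + (3 * \<epsilon> powr (\<theta> - \<theta>')) powr p * J"
  have B0: "0 \<le> B" unfolding B_def using J0 th p by auto
  have IB: "interp_integral S n1 \<theta>' p g \<le> ennreal B"
    unfolding B_def J_def M_def A_def
    using th e g gk Kfun_le_interp_nrm[OF q(1) th(1) f e] interp_sup_const_nonneg p fin
    by (intro interp_integral_decomp_le) auto
  then have Ifin: "interp_integral S n1 \<theta>' p g \<noteq> \<infinity>" by (auto simp: top_unique)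
  have "interp_nrm S n1 \<theta>' q g = enn2real (interp_integral S n1 \<theta>' p g) powr (1/p)"
    using interp_nrm_eq_integral[OF q(2) Ifin[unfolded p_def]] unfolding p_def by simp
  also have "\<dots> \<le> B powr (1/p)"
    using IB B0 p by (intro powr_mono2) (auto simp: enn2real_leI)
  also have "B = \<epsilon> powr ((\<theta> - \<theta>') * p) * J * (2 powr p * \<theta> / (1 - \<theta>') + 3 powr p)"
    unfolding B_def using split_bound_eq[OF p th(3) e M0 Mp] .
  also have "(\<epsilon> powr ((\<theta> - \<theta>') * p) * J * (2 powr p * \<theta> / (1 - \<theta>') + 3 powr p)) powr (1/p)
      = \<epsilon> powr (\<theta> - \<theta>') * A * decomp_const q \<theta> \<theta>'"
    unfolding AJ decomp_const_def using q J0 th p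
    by (simp add: p_def[symmetric] powr_mult powr_powr)
  finally show ?thesis unfolding A_def by (simp add: mult.commute mult.left_commute)
qed

lemma interp_nrm_decomp_le:
  assumes q: "1 \<le> q" and th: "0 < \<theta>" "\<theta> \<le> \<theta>'" "\<theta>' < 1" and e: "\<epsilon> > 0" and g: "g \<in> S"
    and gk: "norm (f - g) + \<epsilon> * n1 g \<le> 2 * Kfun S n1 \<epsilon> f"
    and f: "f \<in> interp_space S n1 \<theta> q"
  shows "interp_nrm S n1 \<theta>' q g \<le> decomp_const q \<theta> \<theta>' * \<epsilon> powr (\<theta> - \<theta>') * interp_nrm S n1 \<theta> q f"
proof (cases "q = \<infinity>")
  case True
  then show ?thesis
    using interp_nrm_decomp_le_infinity[OF th e g gk] f by (simp add: decomp_const_def)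
next
  case False
  show ?thesis by (rule interp_nrm_decomp_le_finite[OF q False th e g gk f])
qed

lemma interp_nrm_sum_decomp_le:
  assumes q: "1 \<le> q" and th: "0 < \<theta>" and thI: "\<And>i. i \<in> I \<Longrightarrow> \<theta> \<le> \<tau> i \<and> \<tau> i < 1"
    and e: "\<epsilon> > 0" and g: "g \<in> S" and gk: "norm (f - g) + \<epsilon> * n1 g \<le> 2 * Kfun S n1 \<epsilon> f"
    and f: "f \<in> interp_space S n1 \<theta> q"
  shows "(\<Sum>i\<in>I. \<epsilon> powr \<tau> i * interp_nrm S n1 (\<tau> i) q g)
    \<le> (\<Sum>i\<in>I. decomp_const q \<theta> (\<tau> i)) * (\<epsilon> powr \<theta> * interp_nrm S n1 \<theta> q f)"
  unfolding sum_distrib_right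
proof (rule sum_mono)
  fix i assume i: "i \<in> I"
  have "interp_nrm S n1 (\<tau> i) q g \<le> decomp_const q \<theta> (\<tau> i) * \<epsilon> powr (\<theta> - \<tau> i) * interp_nrm S n1 \<theta> q f"
    using thI[OF i] by (intro interp_nrm_decomp_le[OF q th _ _ e g gk f]) auto
  from mult_left_mono[OF this, of "\<epsilon> powr \<tau> i"]
  show "\<epsilon> powr \<tau> i * interp_nrm S n1 (\<tau> i) q g \<le> decomp_const q \<theta> (\<tau> i) * (\<epsilon> powr \<theta> * interp_nrm S n1 \<theta> q f)"
    using e by (simp add: powr_diff field_simps)
qed

lemma interp_functional_bound:
  fixes l :: "'a \<Rightarrow> real" and \<tau> :: "'i \<Rightarrow> real"
  assumes q: "1 \<le> q" and th: "0 < \<theta>" and thI: "\<And>i. i \<in> I \<Longrightarrow> \<theta> \<le> \<tau> i \<and> \<tau> i < 1"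
    and l: "bounded_linear l" and e: "0 < \<epsilon>" and C0: "0 \<le> C0" and C1: "0 \<le> C1"
    and H0: "\<And>f. \<bar>l f\<bar> \<le> C0 * norm f"
    and H1: "\<And>f. f \<in> S \<Longrightarrow> \<bar>l f\<bar> \<le> C1 * ((\<Sum>i\<in>I. \<epsilon> powr \<tau> i * interp_nrm S n1 (\<tau> i) q f) + \<epsilon> * n1 f)"
    and f: "f \<in> interp_space S n1 \<theta> q"
  shows "\<bar>l f\<bar> \<le> (2 * C0 * interp_sup_const q \<theta> + C1 * ((\<Sum>i\<in>I. decomp_const q \<theta> (\<tau> i)) + 2 * interp_sup_const q \<theta>))
                  * (\<epsilon> powr \<theta> * interp_nrm S n1 \<theta> q f)"
    (is "_ \<le> (2 * C0 * ?c + C1 * (?D + 2 * ?c)) * ?X")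
proof -
  define k where "k = Kfun S n1 \<epsilon> f"
  have X0: "0 \<le> ?X" by simp
  have "\<epsilon> powr (-\<theta>) * k \<le> ?c * interp_nrm S n1 \<theta> q f"
    unfolding k_def by (rule Kfun_le_interp_nrm[OF q th f e])
  then have kX: "k \<le> ?c * ?X"
    using mult_left_mono[of _ _ "\<epsilon> powr \<theta>"] e by (simp add: powr_minus field_simps)
  show ?thesis
  proof (cases "k = 0")
    case True
    then have "f = 0" unfolding k_def using Kfun_eq_0_imp[OF e] by simp
    moreover have "0 \<le> 2 * C0 * ?c + C1 * (?D + 2 * ?c)"
      using C0 C1 interp_sup_const_nonneg decomp_const_nonneg by (simp add: sum_nonneg)
    ultimately show ?thesis
      using X0 by (simp add: linear_simps[OF l])
  next
    case False
    then have "k < 2 * k" using Kfun_nonneg[of \<epsilon> f] e unfolding k_def by simp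
    then obtain g where g: "g \<in> S" and gk: "norm (f - g) + \<epsilon> * n1 g < 2 * k"
      using Kfun_less_obtain e unfolding k_def by (metis less_imp_le)
    have fg: "norm (f - g) \<le> 2 * k" and eg: "\<epsilon> * n1 g \<le> 2 * k"
      using gk e banach_subspace_nonneg[OF bs g] norm_ge_zero[of "f - g"]
      by (smt (verit) mult_nonneg_nonneg)+
    have sum_g: "(\<Sum>i\<in>I. \<epsilon> powr \<tau> i * interp_nrm S n1 (\<tau> i) q g) \<le> ?D * ?X"
      using gk unfolding k_def by (intro interp_nrm_sum_decomp_le[OF q th thI e g _ f]) auto
    have "\<bar>l f\<bar> \<le> \<bar>l (f - g)\<bar> + \<bar>l g\<bar>"
      using l by (simp add: linear_simps abs_triangle_ineq[of "l f - l g" "l g", simplified])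
    also have "\<dots> \<le> C0 * norm (f - g) + C1 * ((\<Sum>i\<in>I. \<epsilon> powr \<tau> i * interp_nrm S n1 (\<tau> i) q g) + \<epsilon> * n1 g)"
      using H0 H1[OF g] by (rule add_mono)
    also have "\<dots> \<le> C0 * (2 * (?c * ?X)) + C1 * (?D * ?X + 2 * (?c * ?X))"
      using fg eg kX sum_g C0 C1 by (intro add_mono mult_left_mono) auto
    also have "\<dots> = (2 * C0 * ?c + C1 * (?D + 2 * ?c)) * ?X" by (simp add: algebra_simps)
    finally show ?thesis .
  qed
qed

end

theorem lemma2p2:
  fixes S :: "'a::banach set" and n1 :: "'a \<Rightarrow> real"
    and q :: ennreal and n :: nat and \<theta> :: "nat \<Rightarrow> real" and C0 C1 :: real
  assumes "banach_subspace S n1"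
    and "1 \<le> q"
    and "1 \<le> n"
    and "0 < \<theta> 1" and "\<theta> n < 1"
    and "\<forall>i j. 1 \<le> i \<and> i < j \<and> j \<le> n \<longrightarrow> \<theta> i < \<theta> j"
    and "0 < C0" and "0 < C1"
  shows "\<exists>C>0. \<forall>(l::'a \<Rightarrow> real) (\<epsilon>::real).
           bounded_linear l \<and> 0 < \<epsilon> \<and>
           (\<forall>f. \<bar>l f\<bar> \<le> C0 * norm f) \<and>
           (\<forall>f\<in>S. \<bar>l f\<bar> \<le> C1 * ((\<Sum>i=1..n. \<epsilon> powr (\<theta> i) * interp_nrm S n1 (\<theta> i) q f) + \<epsilon> * n1 f))
           \<longrightarrow> (\<forall>f\<in>interp_space S n1 (\<theta> 1) q.
                  \<bar>l f\<bar> \<le> C * \<epsilon> powr (\<theta> 1) * interp_nrm S n1 (\<theta> 1) q f)"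
proof -
  define c where "c = interp_sup_const q (\<theta> 1)"
  define D where "D = (\<Sum>i=1..n. decomp_const q (\<theta> 1) (\<theta> i))"
  define C where "C = 2 * C0 * c + C1 * (D + 2 * c)"
  have C: "0 \<le> C" unfolding C_def c_def D_def
    using assms(7,8) interp_sup_const_nonneg decomp_const_nonneg by (simp add: sum_nonneg)
  have \<theta>_range: "\<theta> 1 \<le> \<theta> i \<and> \<theta> i < 1" if "i \<in> {1..n}" for i
  proof -
    have "\<theta> 1 \<le> \<theta> i" using assms(6) that by (cases "i = 1") (auto simp: less_imp_le)
    moreover have "\<theta> i \<le> \<theta> n" using assms(6) that by (cases "i = n") (auto simp: less_imp_le)
    ultimately show ?thesis using assms(5) by simp
  qed
  show ?thesis
  proof (intro exI[of _ "C + 1"] conjI allI impI ballI)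
    fix l :: "'a \<Rightarrow> real" and \<epsilon> f
    assume "bounded_linear l \<and> 0 < \<epsilon> \<and> (\<forall>f. \<bar>l f\<bar> \<le> C0 * norm f) \<and>
      (\<forall>f\<in>S. \<bar>l f\<bar> \<le> C1 * ((\<Sum>i=1..n. \<epsilon> powr \<theta> i * interp_nrm S n1 (\<theta> i) q f) + \<epsilon> * n1 f))"
      and f: "f \<in> interp_space S n1 (\<theta> 1) q"
    then have "\<bar>l f\<bar> \<le> C * (\<epsilon> powr \<theta> 1 * interp_nrm S n1 (\<theta> 1) q f)"
      unfolding C_def c_def D_def using assms(7,8) \<theta>_range
      by (intro interp_functional_bound[OF assms(1,2,4)]) auto
    also have "\<dots> \<le> (C + 1) * (\<epsilon> powr \<theta> 1 * interp_nrm S n1 (\<theta> 1) q f)"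
      by (intro mult_right_mono) auto
    finally show "\<bar>l f\<bar> \<le> (C + 1) * \<epsilon> powr \<theta> 1 * interp_nrm S n1 (\<theta> 1) q f"
      by (simp add: mult.assoc)
  qed (use C in simp)
qed

end
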